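(* Suppose $E,F\subset\mathcal{T}$ are disjoint stopping times with $F\succ E$. Then: (1) There is a function $h$ on $\mathcal{T}$, admissible for $Cap_{\mathcal{T}}(E,F)$, with $Cap_{\mathcal{T}}(E,F)=\|h\|_{\ell^2}^2$. Put $H=Ih$. (2) $H$ is harmonic on $\mathcal{T}\setminus(E\cup F)$. (3) If $S$ is any stopping time in $\mathcal{T}$, then $\sum_{\kappa\in S}|h(\kappa)|\le2\,Cap_{\mathcal{T}}(E,F)$. (4) $h$ is positive on $\mathcal{G}(E,F)$ and zero elsewhere.
   Context: Tree. $\mathcal{T}$ is the rooted dyadic tree with root $o$ (vertices are the dyadic arcs of the unit circle, each vertex $x$ having two children $x_+,x_-$ and, if $x\ne o$, a parent $x^{-1}$). Write $y\le x$ if $x$ lies in the subtree rooted at $y$, and $y<x$ if moreover $y\ne x$. $[o,x]=\{y:y\le x\}$ and $S(x)=\{y:y\ge x\}$. A stopping time is a set of pairwise incomparable vertices. For stopping times $E,F$, write $F\succ E$ if every $x\in F$ has some $y\in E$ with $y<x$. $\mathcal{G}(E,F)$ is the union of all geodesics $[y,x]=\{z:y\le z\le x\}$ with $x\in F$ and $y\in E$, $y<x$. Capacity. For $f:\mathcal{T}\to\mathbb{R}$ put $If(x)=\sum_{y\in[o,x]}f(y)$. The condenser capacity is $Cap_{\mathcal{T}}(E,F)=\inf\{\|f\|^2_{\ell^2(\mathcal{T})}:If\ge1\text{ on }F,\ \operatorname{supp}f\subset\bigcup_{e\in E}S(e)\}$. Functions satisfying these two constraints are called admissible. Harmonicity.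 For $\Omega\subset\mathcal{T}$, a vertex $x$ is interior to $\Omega$ if $x,x^{-1},x_+,x_-\in\Omega$. A function $H$ is harmonic in $\Omega$ if $H(x)=\frac13[H(x^{-1})+H(x_+)+H(x_-)]$ for every interior point $x$ of $\Omega$. *)

theory Defs
  imports "HOL-Analysis.Analysis" "HOL-Library.Sublist"
begin

text \<open>Vertices of the rooted dyadic tree are finite binary words (paths from the root);
  the root o is the empty word, the children of x are x@[True] and x@[False],
  the parent of x \<noteq> [] is butlast x.  y \<le> x in the tree order iff y is a prefix of x.\<close>

type_synonym vertex = "bool list"

definition stopping_time :: "vertex set \<Rightarrow> bool" where
  "stopping_time S \<longleftrightarrow> (\<forall>x\<in>S. \<forall>y\<in>S. prefix x y \<longrightarrow> x = y)"

definition succ_st :: "vertex set \<Rightarrow> vertex set \<Rightarrow> bool" where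
  "succ_st F E \<longleftrightarrow> (\<forall>x\<in>F. \<exists>y\<in>E. strict_prefix y x)"

definition geod_union :: "vertex set \<Rightarrow> vertex set \<Rightarrow> vertex set" where
  "geod_union E F = {z. \<exists>x\<in>F. \<exists>y\<in>E. strict_prefix y x \<and> prefix y z \<and> prefix z x}"

definition Iop :: "(vertex \<Rightarrow> real) \<Rightarrow> vertex \<Rightarrow> real" where
  "Iop f x = (\<Sum>y\<in>{y. prefix y x}. f y)"

definition l2sq :: "(vertex \<Rightarrow> real) \<Rightarrow> ennreal" where
  "l2sq f = (\<Sum>\<^sub>\<infinity>x. ennreal ((f x)\<^sup>2))"

definition admissible :: "vertex set \<Rightarrow> vertex set \<Rightarrow> (vertex \<Rightarrow> real) \<Rightarrow> bool" where
  "admissible E F f \<longleftrightarrow> (\<forall>x\<in>F. Iop f x \<ge> 1) \<and> (\<forall>x. f x \<noteq> 0 \<longrightarrow> (\<exists>e\<in>E. prefix e x))"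

definition Cap :: "vertex set \<Rightarrow> vertex set \<Rightarrow> ennreal" where
  "Cap E F = (INF f \<in> {f. admissible E F f}. l2sq f)"

definition interior_pt :: "vertex set \<Rightarrow> vertex \<Rightarrow> bool" where
  "interior_pt \<Omega> x \<longleftrightarrow> x \<noteq> [] \<and> x \<in> \<Omega> \<and> butlast x \<in> \<Omega> \<and> x @ [True] \<in> \<Omega> \<and> x @ [False] \<in> \<Omega>"

definition harmonic_on :: "vertex set \<Rightarrow> (vertex \<Rightarrow> real) \<Rightarrow> bool" where
  "harmonic_on \<Omega> H \<longleftrightarrow> (\<forall>x. interior_pt \<Omega> x \<longrightarrow>
     H x = (H (butlast x) + H (x @ [True]) + H (x @ [False])) / 3)"

end

theory Submission
  imports Defs
begin

text \<open>
  For finite capacity, a minimizing sequence is pointwise Cauchy by the parallelogram law,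
  and its limit \<open>h\<close> is a minimizer. Comparing \<open>h\<close> with local perturbations shows that
  \<open>h \<ge> 0\<close>, \<open>Ih \<le> 1\<close>, that \<open>h\<close> is a flow (\<open>h x = h x\<^sub>+ + h x\<^sub>-\<close>) below \<open>E\<close> away from \<open>F\<close>,
  and that \<open>h e = \<Sum>\<^bsub>S(e)\<^esub> h\<^sup>2\<close> for \<open>e \<in> E\<close>. The flow property is exactly the harmonicity
  of \<open>Ih\<close>. A vertex of a geodesic with \<open>h = 0\<close> would stop the flow towards its endpoint
  \<open>f \<in> F\<close>, and then the last positive vertex before \<open>f\<close> would send its flow to a
  vertex where \<open>Ih > 1\<close>. A flow carries through a stopping time at most what it
  receives at \<open>E\<close>, so \<open>\<Sum>\<^bsub>S\<^esub> h \<le> \<Sum>\<^bsub>e\<^esub> h e = \<Sum>\<^bsub>e\<^esub> \<Sum>\<^bsub>S(e)\<^esub> h\<^sup>2 \<le> \<parallel>h\<parallel>\<^sup>2\<close>.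
  For infinite capacity, the minimizers of the problems \<open>({e}, F \<inter> S(e))\<close>, \<open>e \<in> E\<close>,
  are glued together instead.
\<close>

lemma finite_prefixes_of [simp]: "finite {y. prefix y x}"
proof -
  have "{y. prefix y x} = set (prefixes x)"
    by (auto simp: in_set_prefixes)
  then show ?thesis by simp
qed

lemma strict_prefix_imp_prefix_child:
  assumes "strict_prefix x f"
  obtains b where "prefix (x @ [b]) f"
proof -
  obtain z where z: "f = x @ z" "z \<noteq> []"
    using assms by (auto simp: strict_prefix_def elim!: prefixE)
  then obtain c zs where "z = c # zs" by (cases z) auto
  then show ?thesis using z by (intro that[of c]) auto
qed

lemma not_prefix_both_children: "\<not> (prefix (x @ [True]) f \<and> prefix (x @ [False]) f)"
  using prefix_same_cases[of "x @ [True]" f "x @ [False]"] by auto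

lemma stopping_time_prefix_unique:
  "stopping_time S \<Longrightarrow> a \<in> S \<Longrightarrow> b \<in> S \<Longrightarrow> prefix a x \<Longrightarrow> prefix b x \<Longrightarrow> a = b"
  unfolding stopping_time_def by (metis prefix_same_cases)

lemma sum_split_children:
  assumes "finite T" "\<And>t. t \<in> T \<Longrightarrow> strict_prefix y t"
  shows "sum g T = sum g {t \<in> T. prefix (y @ [True]) t} + sum g {t \<in> T. prefix (y @ [False]) t}"
proof -
  have "T = {t \<in> T. prefix (y @ [True]) t} \<union> {t \<in> T. prefix (y @ [False]) t}"
  proof (intro equalityI subsetI)
    fix t
    assume "t \<in> T"
    moreover obtain b where "prefix (y @ [b]) t"
      using assms(2)[OF \<open>t \<in> T\<close>] by (rule strict_prefix_imp_prefix_child)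
    ultimately show "t \<in> {t \<in> T. prefix (y @ [True]) t} \<union> {t \<in> T. prefix (y @ [False]) t}"
      by (cases b) simp_all
  qed blast
  then have "sum g T = sum g ({t \<in> T. prefix (y @ [True]) t} \<union> {t \<in> T. prefix (y @ [False]) t})"
    by (rule arg_cong)
  also have "\<dots> = sum g {t \<in> T. prefix (y @ [True]) t} + sum g {t \<in> T. prefix (y @ [False]) t}"
  proof (rule sum.union_disjoint)
    show "{t \<in> T. prefix (y @ [True]) t} \<inter> {t \<in> T. prefix (y @ [False]) t} = {}"
      using not_prefix_both_children by blast
  qed (simp_all add: assms(1))
  finally show ?thesis .
qed

lemma Iop_Nil: "Iop h [] = h []"
  unfolding Iop_def by simp

lemma Iop_snoc: "Iop h (x @ [b]) = Iop h x + h (x @ [b])"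
proof -
  have "{y. prefix y (x @ [b])} = insert (x @ [b]) {y. prefix y x}"
    by auto
  moreover have "x @ [b] \<notin> {y. prefix y x}"
    by (auto dest: prefix_length_le)
  ultimately show ?thesis
    unfolding Iop_def by (simp add: add.commute)
qed

lemma Iop_butlast: "x \<noteq> [] \<Longrightarrow> Iop h x = Iop h (butlast x) + h x"
  by (metis Iop_snoc append_butlast_last_id)

lemma Iop_fun_upd: "Iop (h(y := v)) x = Iop h x + (if prefix y x then v - h y else 0)"
proof -
  have "Iop (h(y := v)) x = (\<Sum>z\<in>{z. prefix z x}. h z + (if z = y then v - h y else 0))"
    unfolding Iop_def by (rule sum.cong) auto
  then show ?thesis
    unfolding Iop_def by (simp add: sum.distrib)
qed

lemma Iop_mono_prefix: "(\<And>z. 0 \<le> h z) \<Longrightarrow> prefix y x \<Longrightarrow> Iop h y \<le> Iop h x"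
  unfolding Iop_def by (rule sum_mono2) (auto intro: prefix_order.trans)


section \<open>Energy\<close>

definition energy :: "('a \<Rightarrow> real) \<Rightarrow> real" where
  "energy f = (\<Sum>\<^sub>\<infinity>x. (f x)\<^sup>2)"

definition finite_energy :: "('a \<Rightarrow> real) \<Rightarrow> bool" where
  "finite_energy f \<longleftrightarrow> (\<lambda>x. (f x)\<^sup>2) summable_on UNIV"

lemma energy_nonneg: "0 \<le> energy f"
  unfolding energy_def by (rule infsum_nonneg) simp

lemma finite_energy_summable_on: "finite_energy f \<Longrightarrow> (\<lambda>x. (f x)\<^sup>2) summable_on A"
  unfolding finite_energy_def by (rule summable_on_subset_banach) auto

lemma finite_energyI: "(\<And>A. finite A \<Longrightarrow> (\<Sum>x\<in>A. (f x)\<^sup>2) \<le> c) \<Longrightarrow> finite_energy f"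
  unfolding finite_energy_def
  by (rule nonneg_bdd_above_summable_on) (auto intro!: bdd_aboveI[of _ c])

lemma energy_le_if_sums_le:
  assumes "\<And>A. finite A \<Longrightarrow> (\<Sum>x\<in>A. (f x)\<^sup>2) \<le> c"
  shows "energy f \<le> c"
  unfolding energy_def
  by (rule infsum_le_finite_sums) (use finite_energyI[OF assms] assms in \<open>auto simp: finite_energy_def\<close>)

lemma sum_le_energy:
  assumes "finite_energy f" "finite A"
  shows "(\<Sum>x\<in>A. (f x)\<^sup>2) \<le> energy f"
proof -
  have "(\<Sum>x\<in>A. (f x)\<^sup>2) = (\<Sum>\<^sub>\<infinity>x\<in>A. (f x)\<^sup>2)"
    using assms(2) by simp
  also have "\<dots> \<le> energy f"
    unfolding energy_def
    by (rule infsum_mono_neutral) (use assms in \<open>auto simp: finite_energy_def\<close>)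
  finally show ?thesis .
qed

lemma l2sq_eq_SUP: "l2sq f = (SUP A\<in>{A. finite A \<and> A \<subseteq> UNIV}. ennreal (\<Sum>x\<in>A. (f x)\<^sup>2))"
proof -
  have "l2sq f = (SUP A\<in>{A. finite A \<and> A \<subseteq> UNIV}. (\<Sum>x\<in>A. ennreal ((f x)\<^sup>2)))"
    unfolding l2sq_def by (rule nonneg_infsum_complete) auto
  then show ?thesis
    by (simp add: sum_ennreal)
qed

lemma l2sq_eq_energy: "finite_energy f \<Longrightarrow> l2sq f = ennreal (energy f)"
  unfolding l2sq_eq_SUP energy_def finite_energy_def
  by (subst infsum_nonneg_is_SUPREMUM_ennreal) auto

lemma finite_energy_if_l2sq_finite:
  assumes "l2sq f < \<infinity>"
  shows "finite_energy f"
proof (rule finite_energyI)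
  fix A :: "vertex set"
  assume "finite A"
  then have "ennreal (\<Sum>x\<in>A. (f x)\<^sup>2) \<le> l2sq f"
    unfolding l2sq_eq_SUP by (intro SUP_upper) auto
  then have "enn2real (ennreal (\<Sum>x\<in>A. (f x)\<^sup>2)) \<le> enn2real (l2sq f)"
    using assms by (intro enn2real_mono) auto
  then show "(\<Sum>x\<in>A. (f x)\<^sup>2) \<le> enn2real (l2sq f)"
    by (simp add: sum_nonneg)
qed

lemma energy_modify:
  assumes "finite_energy h" "\<And>x. x \<notin> B \<Longrightarrow> g x = h x" "(\<lambda>x. (g x)\<^sup>2) summable_on B"
  shows "finite_energy g" "energy g = energy h - (\<Sum>\<^sub>\<infinity>x\<in>B. (h x)\<^sup>2) + (\<Sum>\<^sub>\<infinity>x\<in>B. (g x)\<^sup>2)"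
proof -
  have outside: "(\<Sum>\<^sub>\<infinity>x\<in>-B. (g x)\<^sup>2) = (\<Sum>\<^sub>\<infinity>x\<in>-B. (h x)\<^sup>2)"
    by (rule infsum_cong) (simp add: assms(2))
  have "(\<lambda>x. (g x)\<^sup>2) summable_on -B"
    using finite_energy_summable_on[OF assms(1)] by (rule summable_on_cong[THEN iffD1, rotated]) (simp add: assms(2))
  then have "(\<lambda>x. (g x)\<^sup>2) summable_on (B \<union> -B)"
    by (intro summable_on_Un_disjoint[OF assms(3)]) auto
  then show g: "finite_energy g"
    unfolding finite_energy_def by simp
  have split: "energy f = (\<Sum>\<^sub>\<infinity>x\<in>B. (f x)\<^sup>2) + (\<Sum>\<^sub>\<infinity>x\<in>-B. (f x)\<^sup>2)" if "finite_energy f" for f :: "'a \<Rightarrow> real"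
    unfolding energy_def
    by (subst infsum_Un_disjoint[symmetric]) (auto intro: finite_energy_summable_on[OF that])
  show "energy g = energy h - (\<Sum>\<^sub>\<infinity>x\<in>B. (h x)\<^sup>2) + (\<Sum>\<^sub>\<infinity>x\<in>B. (g x)\<^sup>2)"
    using split[OF g] split[OF assms(1)] outside by simp
qed

lemma energy_modify_finite:
  assumes "finite_energy h" "finite B" "\<And>x. x \<notin> B \<Longrightarrow> g x = h x"
  shows "finite_energy g" "energy g = energy h - (\<Sum>x\<in>B. (h x)\<^sup>2) + (\<Sum>x\<in>B. (g x)\<^sup>2)"
  using energy_modify[OF assms(1,3)] assms(2) by auto

lemma energy_rescale:
  fixes h :: "'a \<Rightarrow> real" and s r :: real
  assumes h: "finite_energy h" and e: "e \<in> B"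
  defines "g \<equiv> \<lambda>y. if y \<in> B then s * h y + (if y = e then r else 0) else h y"
  shows "finite_energy g"
    and "energy g = energy h + (s * h e + r)\<^sup>2 - (h e)\<^sup>2 + (s\<^sup>2 - 1) * (\<Sum>\<^sub>\<infinity>y\<in>B - {e}. (h y)\<^sup>2)"
proof -
  define D where "D = B - {e}"
  define A where "A = (\<Sum>\<^sub>\<infinity>y\<in>D. (h y)\<^sup>2)"
  have B: "B = insert e D" "e \<notin> D"
    using e by (auto simp: D_def)
  have summable_D: "(\<lambda>y. (h y)\<^sup>2) summable_on D"
    by (rule finite_energy_summable_on[OF h])
  have scaled: "(g y)\<^sup>2 = s\<^sup>2 * (h y)\<^sup>2" if "y \<in> D" for y
    using that by (auto simp: g_def D_def power_mult_distrib)
  have on_D: "((\<lambda>y. (g y)\<^sup>2) has_sum s\<^sup>2 * A) D"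
    unfolding A_def using has_sum_cmult_right[OF has_sum_infsum[OF summable_D], of "s\<^sup>2"]
    by (rule has_sum_cong[THEN iffD1, rotated]) (simp add: scaled)
  then have summable_B: "(\<lambda>y. (g y)\<^sup>2) summable_on B"
    unfolding B summable_on_insert_iff by (auto simp: summable_on_def)
  have "(\<Sum>\<^sub>\<infinity>y\<in>B. (g y)\<^sup>2) = (g e)\<^sup>2 + s\<^sup>2 * A"
    unfolding B infsum_insert[OF has_sum_imp_summable[OF on_D] B(2)] infsumI[OF on_D] ..
  moreover have "(\<Sum>\<^sub>\<infinity>y\<in>B. (h y)\<^sup>2) = (h e)\<^sup>2 + A"
    unfolding B A_def by (rule infsum_insert[OF summable_D B(2)])
  moreover have "g x = h x" if "x \<notin> B" for x
    using that by (simp add: g_def)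
  ultimately show "finite_energy g"
    and "energy g = energy h + (s * h e + r)\<^sup>2 - (h e)\<^sup>2 + (s\<^sup>2 - 1) * (\<Sum>\<^sub>\<infinity>y\<in>B - {e}. (h y)\<^sup>2)"
    using energy_modify[OF h _ summable_B] e by (auto simp: g_def A_def D_def algebra_simps)
qed

lemma energy_parallelogram:
  assumes "finite_energy f" "finite_energy g"
  shows "finite_energy (\<lambda>x. (f x + g x) / 2)" "finite_energy (\<lambda>x. (f x - g x) / 2)"
    and "energy (\<lambda>x. (f x + g x) / 2) + energy (\<lambda>x. (f x - g x) / 2) = (energy f + energy g) / 2"
proof -
  have sum_fg: "(\<lambda>x. (f x)\<^sup>2 + (g x)\<^sup>2) summable_on UNIV"
    using assms unfolding finite_energy_def by (rule summable_on_add)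
  have "((a + b) / 2)\<^sup>2 \<le> a\<^sup>2 + b\<^sup>2" "((a - b) / 2)\<^sup>2 \<le> a\<^sup>2 + b\<^sup>2" for a b :: real
    using sum_squares_ge_zero[of "a - b" 0] sum_squares_ge_zero[of "a + b" 0]
    by (auto simp: power2_eq_square field_simps)
  then show plus: "finite_energy (\<lambda>x. (f x + g x) / 2)" and minus: "finite_energy (\<lambda>x. (f x - g x) / 2)"
    unfolding finite_energy_def by (auto intro!: summable_on_comparison_test[OF sum_fg])
  have "energy (\<lambda>x. (f x + g x) / 2) + energy (\<lambda>x. (f x - g x) / 2)
      = (\<Sum>\<^sub>\<infinity>x. ((f x + g x) / 2)\<^sup>2 + ((f x - g x) / 2)\<^sup>2)"
    unfolding energy_def using plus minus unfolding finite_energy_def by (rule infsum_add[symmetric])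
  also have "\<dots> = (\<Sum>\<^sub>\<infinity>x. 1/2 * ((f x)\<^sup>2 + (g x)\<^sup>2))"
    by (rule infsum_cong) (simp add: power2_eq_square field_simps)
  also have "\<dots> = (energy f + energy g) / 2"
    unfolding energy_def infsum_cmult_right' infsum_add[OF assms[unfolded finite_energy_def]]
    by simp
  finally show "energy (\<lambda>x. (f x + g x) / 2) + energy (\<lambda>x. (f x - g x) / 2) = (energy f + energy g) / 2" .
qed

lemma linear_coeff_zero_if_quadratic_nonneg:
  fixes \<alpha> \<beta> :: real
  assumes "\<And>t. \<bar>t\<bar> \<le> 1 \<Longrightarrow> 0 \<le> \<alpha> * t\<^sup>2 + \<beta> * t"
  shows "\<beta> = 0"
proof (rule ccontr)
  assume "\<beta> \<noteq> 0"
  define c where "c = 2 * (\<bar>\<alpha>\<bar> + \<bar>\<beta>\<bar> + 1)"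
  have c: "c > 0" "c \<ge> 2 * \<bar>\<beta>\<bar>" "c > \<alpha>"
    by (auto simp: c_def)
  have "\<bar>- \<beta> / c\<bar> \<le> 1"
    using c by (auto simp: abs_divide field_simps)
  then have "0 \<le> \<alpha> * (- \<beta> / c)\<^sup>2 + \<beta> * (- \<beta> / c)"
    by (rule assms)
  also have "\<dots> = \<beta>\<^sup>2 * (\<alpha> - c) / c\<^sup>2"
    using c by (simp add: power2_eq_square field_simps)
  also have "\<dots> < 0"
    using \<open>\<beta> \<noteq> 0\<close> c by (intro divide_neg_pos mult_pos_neg) auto
  finally show False by simp
qed

section \<open>First-order conditions for the capacity minimizer\<close>

lemma Cap_le_energy: "admissible E F g \<Longrightarrow> finite_energy g \<Longrightarrow> Cap E F \<le> ennreal (energy g)"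
  unfolding Cap_def by (metis INF_lower l2sq_eq_energy mem_Collect_eq)


locale cap_minimizer =
  fixes E F :: "vertex set" and h :: "vertex \<Rightarrow> real"
  assumes admissible: "admissible E F h"
    and finite_energy: "finite_energy h"
    and minimal: "\<And>g. admissible E F g \<Longrightarrow> finite_energy g \<Longrightarrow> energy h \<le> energy g"
begin

lemma support: "h x \<noteq> 0 \<Longrightarrow> \<exists>e\<in>E. prefix e x"
  using admissible unfolding admissible_def by auto

lemma Iop_ge_1: "f \<in> F \<Longrightarrow> 1 \<le> Iop h f"
  using admissible unfolding admissible_def by auto

lemma l2sq_eq_Cap: "l2sq h = Cap E F"
proof (rule antisym)
  show "l2sq h \<le> Cap E F"
    unfolding Cap_def
  proof (rule INF_greatest)
    fix g
    assume g: "g \<in> {g. admissible E F g}"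
    show "l2sq h \<le> l2sq g"
    proof (cases "finite_energy g")
      case True
      then show ?thesis
        using minimal[of g] g by (simp add: l2sq_eq_energy finite_energy ennreal_leI)
    next
      case False
      then have "l2sq g = \<infinity>"
        using finite_energy_if_l2sq_finite by (metis less_top infinity_ennreal_def)
      then show ?thesis by simp
    qed
  qed
  show "Cap E F \<le> l2sq h"
    unfolding Cap_def by (rule INF_lower) (simp add: admissible)
qed

lemma first_variation_zero:
  assumes "\<And>t. \<bar>t\<bar> \<le> 1 \<Longrightarrow> admissible E F (g t) \<and> finite_energy (g t)"
    and "\<And>t. energy (g t) = energy h + \<alpha> * t\<^sup>2 + \<beta> * t"
  shows "\<beta> = 0"
proof (rule linear_coeff_zero_if_quadratic_nonneg)
  fix t :: real
  assume "\<bar>t\<bar> \<le> 1"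
  then show "0 \<le> \<alpha> * t\<^sup>2 + \<beta> * t"
    using minimal[of "g t"] assms by auto
qed

lemma sq_le_sq_if_admissible_update:
  assumes "admissible E F (h(x := v))"
  shows "(h x)\<^sup>2 \<le> v\<^sup>2"
proof -
  have "finite_energy (h(x := v))" "energy (h(x := v)) = energy h - (h x)\<^sup>2 + v\<^sup>2"
    using energy_modify_finite[OF finite_energy, of "{x}" "h(x := v)"] by auto
  then show ?thesis
    using minimal[OF assms] by simp
qed

lemma admissible_update:
  assumes "\<And>f. f \<in> F \<Longrightarrow> prefix x f \<Longrightarrow> 1 \<le> Iop h f + v - h x"
    and "v \<noteq> 0 \<Longrightarrow> \<exists>e\<in>E. prefix e x"
  shows "admissible E F (h(x := v))"
  using admissible assms unfolding admissible_def by (auto simp: Iop_fun_upd add_diff_eq)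

lemma nonneg: "0 \<le> h x"
proof (rule ccontr)
  assume neg: "\<not> 0 \<le> h x"
  have "admissible E F (h(x := 0))"
    by (rule admissible_update) (use Iop_ge_1 neg in force)+
  from sq_le_sq_if_admissible_update[OF this] neg show False
    by simp
qed

lemma vanishes_off_ancestors_of_F:
  assumes "\<And>f. f \<in> F \<Longrightarrow> \<not> prefix x f"
  shows "h x = 0"
proof (rule ccontr)
  assume "h x \<noteq> 0"
  moreover have "admissible E F (h(x := 0))"
    by (rule admissible_update) (use assms in auto)
  ultimately show False
    using sq_le_sq_if_admissible_update[of x 0] by simp
qed

lemma not_positive_if_Iop_gt_1:
  assumes "1 < Iop h y"
  shows "\<not> 0 < h y"
proof
  assume pos: "0 < h y"
  define t where "t = min (h y) (Iop h y - 1)"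
  have t: "0 < t" "t \<le> h y" "t \<le> Iop h y - 1"
    using pos assms by (auto simp: t_def)
  have "admissible E F (h(y := h y - t))"
  proof (rule admissible_update)
    fix f
    assume "f \<in> F" "prefix y f"
    then have "Iop h y \<le> Iop h f"
      by (intro Iop_mono_prefix nonneg)
    with t show "1 \<le> Iop h f + (h y - t) - h y" by simp
  qed (use support pos in auto)
  then have "(h y)\<^sup>2 \<le> (h y - t)\<^sup>2"
    by (rule sq_le_sq_if_admissible_update)
  moreover have "(h y - t)\<^sup>2 < (h y)\<^sup>2"
    using t by (intro power_strict_mono) auto
  ultimately show False by simp
qed

lemma Iop_le_1: "Iop h x \<le> 1"
proof (rule ccontr)
  assume "\<not> Iop h x \<le> 1"
  then obtain y where y: "prefix y x" "1 < Iop h y"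
    and shortest: "\<And>z. prefix z x \<Longrightarrow> 1 < Iop h z \<Longrightarrow> length y \<le> length z"
    using ex_has_least_nat[of "\<lambda>z. prefix z x \<and> 1 < Iop h z" x length] by force
  have "0 < h y"
  proof (cases "y = []")
    case True
    then show ?thesis using y by (simp add: Iop_Nil)
  next
    case False
    have "prefix (butlast y) x" "length (butlast y) < length y"
      using y(1) False by (auto intro: prefix_order.trans[OF prefixeq_butlast])
    then have "\<not> 1 < Iop h (butlast y)"
      using shortest[of "butlast y"] by fastforce
    then show ?thesis
      using y(2) Iop_butlast[OF False, of h] by simp
  qed
  then show False
    using not_positive_if_Iop_gt_1[OF y(2)] by simp
qed

lemma conservation:
  assumes "\<exists>e\<in>E. prefix e x" "x \<notin> F"
  shows "h x = h (x @ [True]) + h (x @ [False])"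
proof -
  define C where "C = {x, x @ [True], x @ [False]}"
  define g where "g t = h(x := h x + t, x @ [True] := h (x @ [True]) - t, x @ [False] := h (x @ [False]) - t)" for t
  have Iop_g: "Iop (g t) f = Iop h f + (if prefix x f then t else 0)
      - (if prefix (x @ [True]) f then t else 0) - (if prefix (x @ [False]) f then t else 0)" for t f
    unfolding g_def by (simp add: Iop_fun_upd)
  have "admissible E F (g t)" for t
    unfolding admissible_def
  proof (intro conjI ballI allI impI)
    fix f
    assume f: "f \<in> F"
    have "\<not> (prefix (x @ [True]) f \<and> prefix (x @ [False]) f)"
      by (rule not_prefix_both_children)
    moreover have "prefix x f \<longleftrightarrow> prefix (x @ [True]) f \<or> prefix (x @ [False]) f"
      using assms(2) f strict_prefix_imp_prefix_child[of x f]
      by (metis (full_types) prefix_order.le_less prefix_snocD prefix_order.less_imp_le)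
    ultimately show "1 \<le> Iop (g t) f"
      using Iop_ge_1[OF f] unfolding Iop_g by auto
  next
    fix y
    assume "g t y \<noteq> 0"
    then show "\<exists>e\<in>E. prefix e y"
      using assms(1) support by (cases "y \<in> C") (auto simp: g_def C_def intro: prefix_order.trans)
  qed
  moreover have "finite_energy (g t)"
    "energy (g t) = energy h + 3 * t\<^sup>2 + 2 * (h x - h (x @ [True]) - h (x @ [False])) * t" for t
    using energy_modify_finite[OF finite_energy, of C "g t"]
    by (auto simp: C_def g_def power2_eq_square algebra_simps)
  ultimately have "2 * (h x - h (x @ [True]) - h (x @ [False])) = 0"
    by (intro first_variation_zero[of g]) auto
  then show ?thesis by simp
qed

end

locale cap_minimizer_stopping = cap_minimizer +
  assumes stopping_E: "stopping_time E" and stopping_F: "stopping_time F"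
    and disjoint: "E \<inter> F = {}"
begin

lemma support_below:
  assumes "e \<in> E" "prefix e f" "prefix y f" "h y \<noteq> 0"
  shows "prefix e y"
proof -
  obtain e' where "e' \<in> E" "prefix e' y"
    using support assms(4) by blast
  moreover from this have "e' = e"
    using assms(1-3) by (metis stopping_time_prefix_unique[OF stopping_E] prefix_order.trans)
  ultimately show ?thesis by simp
qed

lemma energy_below_E:
  assumes e: "e \<in> E"
  shows "(\<Sum>\<^sub>\<infinity>y\<in>{y. prefix e y}. (h y)\<^sup>2) = h e"
proof -
  define A where "A = (\<Sum>\<^sub>\<infinity>y\<in>{y. prefix e y} - {e}. (h y)\<^sup>2)"
  define g where "g t y = (if y \<in> {y. prefix e y} then (1 - t) * h y + (if y = e then t else 0) else h y)"
    for t y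
  have "admissible E F (g t)" if t: "\<bar>t\<bar> \<le> 1" for t
    unfolding admissible_def
  proof (intro conjI ballI allI impI)
    fix f
    assume f: "f \<in> F"
    show "1 \<le> Iop (g t) f"
    proof (cases "prefix e f")
      case True
      have "g t y = (1 - t) * h y + (if y = e then t else 0)" if "prefix y f" for y
        using support_below[OF e True that] by (auto simp: g_def)
      then have "Iop (g t) f = (1 - t) * Iop h f + t"
        unfolding Iop_def using True by (simp add: sum.distrib sum_distrib_left)
      moreover have "0 \<le> (1 - t) * (Iop h f - 1)"
        using Iop_ge_1[OF f] t by simp
      ultimately show ?thesis by (simp add: algebra_simps)
    next
      case False
      then have "Iop (g t) f = Iop h f"
        unfolding Iop_def by (intro sum.cong) (auto simp: g_def intro: prefix_order.trans)
      then show ?thesis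
        using Iop_ge_1[OF f] by simp
    qed
  next
    fix y
    assume "g t y \<noteq> 0"
    then show "\<exists>e\<in>E. prefix e y"
      using e support by (cases "prefix e y") (auto simp: g_def)
  qed
  moreover have "finite_energy (g t)"
    and "energy (g t) = energy h + (A + (1 - h e)\<^sup>2) * t\<^sup>2 + (2 * h e * (1 - h e) - 2 * A) * t" for t
    using energy_rescale[OF finite_energy, of e "{y. prefix e y}" "1 - t" t]
    unfolding g_def[abs_def] A_def by (auto simp: power2_eq_square algebra_simps)
  ultimately have "2 * h e * (1 - h e) - 2 * A = 0"
    by (intro first_variation_zero[of g]) auto
  moreover have "(\<Sum>\<^sub>\<infinity>y\<in>{y. prefix e y}. (h y)\<^sup>2) = (h e)\<^sup>2 + A"
    unfolding A_def using infsum_insert[OF finite_energy_summable_on[OF finite_energy], of e "{y. prefix e y} - {e}"]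
    by (simp add: insert_absorb)
  ultimately show ?thesis
    by (simp add: power2_eq_square algebra_simps)
qed

lemma not_in_F_if_strict_prefix_of_F: "f \<in> F \<Longrightarrow> strict_prefix y f \<Longrightarrow> y \<notin> F"
  using stopping_F unfolding stopping_time_def by (auto simp: strict_prefix_def)

lemma vanishes_strictly_below_F:
  assumes "f \<in> F" "strict_prefix f t"
  shows "h t = 0"
proof (rule vanishes_off_ancestors_of_F)
  fix f'
  assume "f' \<in> F"
  show "\<not> prefix t f'"
  proof
    assume "prefix t f'"
    with assms(2) have "strict_prefix f f'"
      by (rule prefix_order.less_le_trans)
    with \<open>f' \<in> F\<close> assms(1) show False
      using not_in_F_if_strict_prefix_of_F by blast
  qed
qed

lemma zero_propagates_towards_F:
  assumes "h z = 0" "\<exists>e\<in>E. prefix e z" "prefix z y" "prefix y f" "f \<in> F"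
  shows "h y = 0"
  using assms(3,4)
proof (induction y rule: rev_induct)
  case Nil
  then show ?case using assms(1) by simp
next
  case (snoc b y)
  show ?case
  proof (cases "z = y @ [b]")
    case True
    then show ?thesis using assms(1) by simp
  next
    case False
    with snoc.prems have "prefix z y" "prefix y f"
      by (auto simp: strict_prefix_def dest: prefix_snocD)
    with snoc.IH have "h y = 0" by simp
    moreover have "y \<notin> F"
      using not_in_F_if_strict_prefix_of_F[OF assms(5)] prefix_snocD[OF \<open>prefix (y @ [b]) f\<close>] by blast
    moreover have "\<exists>e\<in>E. prefix e y"
      using assms(2) \<open>prefix z y\<close> by (auto intro: prefix_order.trans)
    ultimately show ?thesis
      using conservation nonneg[of "y @ [True]"] nonneg[of "y @ [False]"] by (cases b) force+
  qed
qed

lemma deepest_positive_prefix: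
  assumes f: "f \<in> F"
  obtains q where "prefix q f" "0 < h q" "\<And>y. prefix y f \<Longrightarrow> \<not> prefix y q \<Longrightarrow> h y = 0"
proof -
  have "\<exists>y. prefix y f \<and> 0 < h y"
  proof (rule ccontr)
    assume "\<not> ?thesis"
    then have "Iop h f \<le> 0"
      unfolding Iop_def by (intro sum_nonpos) auto
    with Iop_ge_1[OF f] show False by simp
  qed
  then obtain q where q: "prefix q f" "0 < h q"
    and deepest: "\<And>y. prefix y f \<Longrightarrow> 0 < h y \<Longrightarrow> length y \<le> length q"
    using Lattices_Big.ex_has_greatest_nat[of "\<lambda>y. prefix y f \<and> 0 < h y" _ length "Suc (length f)"]
    by (metis le_imp_less_Suc prefix_length_le)
  have "h y = 0" if "prefix y f" "\<not> prefix y q" for y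
    using deepest[of y] that nonneg[of y] prefix_length_prefix[OF that(1) q(1)] by fastforce
  with q show thesis
    by (rule that)
qed

lemma positive_on_F:
  assumes f: "f \<in> F"
  shows "0 < h f"
proof -
  obtain q where q: "prefix q f" "0 < h q" and zero: "\<And>y. prefix y f \<Longrightarrow> \<not> prefix y q \<Longrightarrow> h y = 0"
    using deepest_positive_prefix[OF f] by blast
  have "q = f"
  proof (rule ccontr)
    \<comment> \<open>otherwise the flow through \<open>q\<close> leaves the path to \<open>f\<close> by the other child, where \<open>Iop h\<close> exceeds \<open>Iop h f \<ge> 1\<close>\<close>
    assume "q \<noteq> f"
    then have "strict_prefix q f"
      using q(1) by (simp add: strict_prefix_def)
    then obtain b where qb: "prefix (q @ [b]) f"
      by (rule strict_prefix_imp_prefix_child)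
    have "Iop h q = Iop h f"
      unfolding Iop_def
      by (rule sum.mono_neutral_left) (use q(1) zero in \<open>auto intro: prefix_order.trans\<close>)
    moreover have "h (q @ [\<not> b]) = h q"
    proof -
      have "h (q @ [b]) = 0"
        using zero[OF qb] by simp
      moreover have "h q = h (q @ [True]) + h (q @ [False])"
        using support[of q] q(2) not_in_F_if_strict_prefix_of_F[OF f \<open>strict_prefix q f\<close>]
        by (intro conservation) auto
      ultimately show ?thesis by (cases b) auto
    qed
    ultimately have "1 < Iop h (q @ [\<not> b])"
      using Iop_ge_1[OF f] q(2) by (simp add: Iop_snoc)
    with Iop_le_1 show False
      by (simp add: not_less[symmetric])
  qed
  with q(2) show ?thesis by simp
qed

lemma positive_on_geodesics:
  assumes "x \<in> geod_union E F"
  shows "0 < h x"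
proof (rule ccontr)
  assume "\<not> 0 < h x"
  then have "h x = 0"
    using nonneg[of x] by simp
  moreover obtain f e where "f \<in> F" "e \<in> E" "prefix e x" "prefix x f"
    using assms unfolding geod_union_def by blast
  ultimately have "h f = 0"
    using zero_propagates_towards_F by blast
  with positive_on_F[OF \<open>f \<in> F\<close>] show False
    by simp
qed

lemma zero_off_geodesics:
  assumes "x \<notin> geod_union E F"
  shows "h x = 0"
proof (rule ccontr)
  assume hx: "h x \<noteq> 0"
  then obtain e where e: "e \<in> E" "prefix e x"
    using support by blast
  obtain f where f: "f \<in> F" "prefix x f"
    using vanishes_off_ancestors_of_F hx by blast
  have "strict_prefix e f"
    using disjoint e f prefix_order.trans[OF e(2) f(2)] by (auto simp: strict_prefix_def)
  with assms e f show False
    unfolding geod_union_def by blast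
qed

lemma sum_stopping_time_below_le_depth:
  assumes "\<exists>e\<in>E. prefix e y" "finite T" "stopping_time T"
    and "\<forall>t\<in>T. prefix y t \<and> length t \<le> length y + n"
  shows "(\<Sum>t\<in>T. h t) \<le> h y"
  using assms
proof (induction n arbitrary: y T)
  case 0
  have "t = y" if "t \<in> T" for t
    using 0 that prefix_length_less[of y t] by (force simp: strict_prefix_def)
  then have "T = {} \<or> T = {y}"
    by blast
  then show ?case
    using nonneg[of y] by auto
next
  case (Suc n)
  consider "y \<in> T" | "y \<notin> T" "y \<in> F" | "y \<notin> T" "y \<notin> F"
    by blast
  then show ?case
  proof cases
    case 1
    then have "T = {y}"
      using Suc.prems(3,4) unfolding stopping_time_def by blast
    then show ?thesis by simp
  next
    case 2
    then have "h t = 0" if "t \<in> T" for t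
      using Suc.prems(4) that by (intro vanishes_strictly_below_F[of y]) (auto simp: strict_prefix_def)
    then show ?thesis
      using nonneg[of y] by simp
  next
    case 3
    have IH: "(\<Sum>t\<in>{t \<in> T. prefix (y @ [b]) t}. h t) \<le> h (y @ [b])" for b
    proof (rule Suc.IH)
      show "\<exists>e\<in>E. prefix e (y @ [b])"
        using Suc.prems(1) by (auto intro: prefix_order.trans)
      show "finite {t \<in> T. prefix (y @ [b]) t}" "stopping_time {t \<in> T. prefix (y @ [b]) t}"
        using Suc.prems(2,3) by (auto simp: stopping_time_def)
      show "\<forall>t\<in>{t \<in> T. prefix (y @ [b]) t}. prefix (y @ [b]) t \<and> length t \<le> length (y @ [b]) + n"
        using Suc.prems(4) by auto
    qed
    have "(\<Sum>t\<in>T. h t) = (\<Sum>t\<in>{t \<in> T. prefix (y @ [True]) t}. h t) + (\<Sum>t\<in>{t \<in> T. prefix (y @ [False]) t}. h t)"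
      using Suc.prems(2,4) 3(1) by (intro sum_split_children) (auto simp: strict_prefix_def)
    also have "\<dots> \<le> h (y @ [True]) + h (y @ [False])"
      by (intro add_mono IH)
    also have "\<dots> = h y"
      using conservation[OF Suc.prems(1) 3(2)] by simp
    finally show ?thesis .
  qed
qed

lemma sum_stopping_time_below_le:
  assumes "\<exists>e\<in>E. prefix e y" "finite T" "stopping_time T" "\<forall>t\<in>T. prefix y t"
  shows "(\<Sum>t\<in>T. h t) \<le> h y"
proof (rule sum_stopping_time_below_le_depth)
  show "\<forall>t\<in>T. prefix y t \<and> length t \<le> length y + Max (length ` T)"
    using assms(2,4) by (auto intro: trans_le_add2 Max_ge)
qed (use assms in simp_all)

lemma sum_stopping_time_le_energy:
  assumes S: "stopping_time S" and A: "finite A" "A \<subseteq> S"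
  shows "(\<Sum>t\<in>A. h t) \<le> energy h"
proof -
  define A' where "A' = {t \<in> A. h t \<noteq> 0}"
  define R where "R = {e \<in> E. \<exists>t\<in>A'. prefix e t}"
  define below where "below e = {t \<in> A'. prefix e t}" for e
  have "finite A'"
    using A by (simp add: A'_def)
  have "R \<subseteq> (\<Union>t\<in>A'. {e. prefix e t})"
    by (auto simp: R_def)
  then have "finite R"
    by (rule finite_subset) (use \<open>finite A'\<close> in simp)
  have disjoint_subtrees: "{y. prefix e y} \<inter> {y. prefix e' y} = {}"
    if "e \<in> R" "e' \<in> R" "e \<noteq> e'" for e e'
    using that stopping_time_prefix_unique[OF stopping_E] by (auto simp: R_def)
  then have disjoint_below: "below e \<inter> below e' = {}" if "e \<in> R" "e' \<in> R" "e \<noteq> e'" for e e'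
    using that by (auto simp: below_def)
  have partition: "A' = (\<Union>e\<in>R. below e)"
    using support by (auto simp: A'_def R_def below_def)
  have "(\<Sum>t\<in>A. h t) = (\<Sum>t\<in>A'. h t)"
    by (rule sum.mono_neutral_right) (use A in \<open>auto simp: A'_def\<close>)
  also have "\<dots> = (\<Sum>e\<in>R. \<Sum>t\<in>below e. h t)"
    unfolding partition
    by (rule sum.UNION_disjoint) (use \<open>finite R\<close> \<open>finite A'\<close> disjoint_below in \<open>auto simp: below_def\<close>)
  also have "\<dots> \<le> (\<Sum>e\<in>R. h e)"
  proof (rule sum_mono)
    fix e
    assume "e \<in> R"
    show "(\<Sum>t\<in>below e. h t) \<le> h e"
      by (rule sum_stopping_time_below_le)
        (use \<open>e \<in> R\<close> \<open>finite A'\<close> S A in \<open>auto simp: R_def below_def A'_def stopping_time_def\<close>)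
  qed
  also have "\<dots> = (\<Sum>e\<in>R. \<Sum>\<^sub>\<infinity>y\<in>{y. prefix e y}. (h y)\<^sup>2)"
    by (simp add: energy_below_E R_def)
  also have "\<dots> = (\<Sum>\<^sub>\<infinity>y\<in>(\<Union>e\<in>R. {y. prefix e y}). (h y)\<^sup>2)"
    by (rule sum_infsum[OF \<open>finite R\<close> finite_energy_summable_on[OF finite_energy] disjoint_subtrees])
  also have "\<dots> \<le> energy h"
    unfolding energy_def
    by (rule infsum_mono_neutral) (use finite_energy in \<open>auto simp: finite_energy_def finite_energy_summable_on\<close>)
  finally show ?thesis .
qed

lemma infsum_stopping_time_le_energy:
  assumes "stopping_time S"
  shows "(\<Sum>\<^sub>\<infinity>\<kappa>\<in>S. ennreal \<bar>h \<kappa>\<bar>) \<le> ennreal (energy h)"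
proof -
  have "(\<Sum>\<^sub>\<infinity>\<kappa>\<in>S. ennreal \<bar>h \<kappa>\<bar>) = (SUP A\<in>{A. finite A \<and> A \<subseteq> S}. (\<Sum>\<kappa>\<in>A. ennreal (h \<kappa>)))"
    using nonneg by (subst nonneg_infsum_complete) auto
  also have "\<dots> \<le> ennreal (energy h)"
    using sum_stopping_time_le_energy[OF assms] nonneg
    by (intro SUP_least) (auto simp: sum_ennreal intro: ennreal_leI)
  finally show ?thesis .
qed

end

section \<open>Existence of the capacity minimizer\<close>

lemma admissible_midpoint:
  assumes "admissible E F f" "admissible E F g"
  shows "admissible E F (\<lambda>x. (f x + g x) / 2)"
  unfolding admissible_def
proof (intro conjI ballI allI impI)
  fix y
  assume "y \<in> F"
  then have "1 \<le> Iop f y" "1 \<le> Iop g y"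
    using assms unfolding admissible_def by auto
  moreover have "Iop (\<lambda>x. (f x + g x) / 2) y = (Iop f y + Iop g y) / 2"
    unfolding Iop_def by (simp add: sum_divide_distrib[symmetric] sum.distrib)
  ultimately show "1 \<le> Iop (\<lambda>x. (f x + g x) / 2) y"
    by simp
next
  fix x
  assume "(f x + g x) / 2 \<noteq> 0"
  then have "f x \<noteq> 0 \<or> g x \<noteq> 0"
    by auto
  then show "\<exists>e\<in>E. prefix e x"
    using assms unfolding admissible_def by auto
qed

lemma admissible_pointwise_limit:
  assumes adm: "\<And>n. admissible E F (fs n)" and lim: "\<And>x. (\<lambda>n. fs n x) \<longlonglongrightarrow> h x"
  shows "admissible E F h"
  unfolding admissible_def
proof (intro conjI ballI allI impI)
  fix f
  assume "f \<in> F"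
  then have "\<forall>n. 1 \<le> Iop (fs n) f"
    using adm unfolding admissible_def by blast
  moreover have "(\<lambda>n. Iop (fs n) f) \<longlonglongrightarrow> Iop h f"
    unfolding Iop_def by (intro tendsto_sum lim)
  ultimately show "1 \<le> Iop h f"
    by (intro LIMSEQ_le_const) auto
next
  fix x
  assume "h x \<noteq> 0"
  have "\<exists>n. fs n x \<noteq> 0"
  proof (rule ccontr)
    assume "\<not> (\<exists>n. fs n x \<noteq> 0)"
    then have "(\<lambda>n. fs n x) \<longlonglongrightarrow> 0"
      by simp
    with lim[of x] \<open>h x \<noteq> 0\<close> show False
      using LIMSEQ_unique by blast
  qed
  then show "\<exists>e\<in>E. prefix e x"
    using adm unfolding admissible_def by blast
qed

lemma energy_pointwise_limit_le:
  assumes lim: "\<And>x. (\<lambda>n. f n x) \<longlonglongrightarrow> g x"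
    and bound: "\<And>n. energy (f n) \<le> b n" "b \<longlonglongrightarrow> c" and fin: "\<And>n. finite_energy (f n)"
  shows "finite_energy g" "energy g \<le> c"
proof -
  have sums: "(\<Sum>x\<in>A. (g x)\<^sup>2) \<le> c" if "finite A" for A
  proof (rule LIMSEQ_le)
    show "(\<lambda>n. \<Sum>x\<in>A. (f n x)\<^sup>2) \<longlonglongrightarrow> (\<Sum>x\<in>A. (g x)\<^sup>2)"
      by (intro tendsto_sum tendsto_power lim)
    show "\<exists>N. \<forall>n\<ge>N. (\<Sum>x\<in>A. (f n x)\<^sup>2) \<le> b n"
      using sum_le_energy[OF fin that] bound(1) order_trans by blast
  qed (rule bound(2))
  then show "finite_energy g" "energy g \<le> c"
    by (auto intro: finite_energyI energy_le_if_sums_le)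
qed

lemma Cauchy_if_dist_le_vanishing:
  fixes X :: "nat \<Rightarrow> 'a::metric_space"
  assumes dist: "\<And>m n. dist (X m) (X n) \<le> b m + b n" and b: "b \<longlonglongrightarrow> 0"
  shows "Cauchy X"
proof (rule metric_CauchyI)
  fix e :: real
  assume "0 < e"
  then obtain M where "\<And>n. M \<le> n \<Longrightarrow> b n < e / 2"
    using order_tendstoD(2)[OF b, of "e / 2"] by (auto simp: eventually_sequentially)
  then show "\<exists>M. \<forall>m\<ge>M. \<forall>n\<ge>M. dist (X m) (X n) < e"
    using dist by (smt (verit, best) field_sum_of_halves)
qed

context
  fixes E F :: "vertex set" and c :: real
  assumes lower: "\<And>g. admissible E F g \<Longrightarrow> finite_energy g \<Longrightarrow> c \<le> energy g"
begin

lemma pointwise_distance_le_energy_excess: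
  assumes "admissible E F f" "finite_energy f" "admissible E F g" "finite_energy g"
  shows "(f x - g x)\<^sup>2 \<le> 2 * (energy f + energy g) - 4 * c"
proof -
  note parallelogram = energy_parallelogram[OF assms(2,4)]
  have "c \<le> energy (\<lambda>x. (f x + g x) / 2)"
    using lower[OF admissible_midpoint[OF assms(1,3)] parallelogram(1)] .
  moreover have "((f x - g x) / 2)\<^sup>2 \<le> energy (\<lambda>x. (f x - g x) / 2)"
    using sum_le_energy[OF parallelogram(2), of "{x}"] by simp
  ultimately show ?thesis
    using parallelogram(3) by (simp add: power_divide)
qed

lemma minimizing_sequence_converges:
  assumes adm: "\<And>n. admissible E F (f n)" and fin: "\<And>n. finite_energy (f n)"
    and small: "\<And>n. energy (f n) \<le> c + inverse (real (Suc n))"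
  obtains g where "admissible E F g" "finite_energy g" "energy g \<le> c"
proof -
  define b where "b n = sqrt (2 * inverse (real (Suc n)))" for n
  have close: "dist (f m x) (f n x) \<le> b m + b n" for m n x
  proof -
    have "\<bar>f m x - f n x\<bar> \<le> sqrt (2 * inverse (real (Suc m)) + 2 * inverse (real (Suc n)))"
      using pointwise_distance_le_energy_excess[OF adm fin adm fin, of m x n] small[of m] small[of n]
      by (intro real_le_rsqrt) (simp add: power2_abs)
    then show ?thesis
      unfolding b_def dist_real_def using sqrt_add_le_add_sqrt[of "2 * inverse (real (Suc m))"]
      by (smt (verit) inverse_nonnegative_iff_nonnegative of_nat_0_le_iff)
  qed
  moreover have vanishing: "b \<longlonglongrightarrow> 0"
    unfolding b_def using tendsto_real_sqrt[OF tendsto_mult_right_zero[OF LIMSEQ_inverse_real_of_nat, of 2]]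
    by (simp add: mult.commute)
  ultimately have "Cauchy (\<lambda>n. f n x)" for x
    by (rule Cauchy_if_dist_le_vanishing)
  then have "convergent (\<lambda>n. f n x)" for x
    by (simp add: Cauchy_convergent_iff)
  then have lim: "(\<lambda>n. f n x) \<longlonglongrightarrow> lim (\<lambda>n. f n x)" for x
    by (simp add: convergent_LIMSEQ_iff)
  show thesis
    using admissible_pointwise_limit[OF adm lim]
      energy_pointwise_limit_le[OF lim small LIMSEQ_inverse_real_of_nat_add fin]
    by (rule that)
qed

end

lemma minimizer_exists:
  assumes "Cap E F < \<infinity>"
  obtains h where "cap_minimizer E F h"
proof -
  define c where "c = enn2real (Cap E F)"
  have Cap_c: "Cap E F = ennreal c" "0 \<le> c"
    using assms by (auto simp: c_def)
  have lower: "c \<le> energy g" if "admissible E F g" "finite_energy g" for g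
    using Cap_le_energy[OF that] Cap_c by (simp add: ennreal_le_iff[OF energy_nonneg])
  have "Cap E F < ennreal (c + inverse (real (Suc n)))" for n
    using Cap_c by (simp add: ennreal_less_iff)
  then have "\<exists>f. admissible E F f \<and> l2sq f < ennreal (c + inverse (real (Suc n)))" for n
    unfolding Cap_def INF_less_iff by auto
  then obtain f where adm: "\<And>n. admissible E F (f n)"
    and near: "\<And>n. l2sq (f n) < ennreal (c + inverse (real (Suc n)))"
    by metis
  have fin: "finite_energy (f n)" for n
    using near[of n] by (intro finite_energy_if_l2sq_finite) (metis ennreal_less_top infinity_ennreal_def order.strict_trans)
  have small: "energy (f n) \<le> c + inverse (real (Suc n))" for n
    using near[of n] unfolding l2sq_eq_energy[OF fin] ennreal_less_iff[OF energy_nonneg] by simp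
  then obtain h where h: "admissible E F h" "finite_energy h" "energy h \<le> c"
    using minimizing_sequence_converges[of E F c f, OF lower adm fin small] by blast
  have "cap_minimizer E F h"
    using h lower by unfold_locales (auto intro: order_trans)
  then show thesis
    by (rule that)
qed

section \<open>Geodesic flows\<close>

definition geodesic_flow :: "vertex set \<Rightarrow> vertex set \<Rightarrow> (vertex \<Rightarrow> real) \<Rightarrow> bool" where
  "geodesic_flow E F h \<longleftrightarrow> admissible E F h
    \<and> (\<forall>x. (\<exists>e\<in>E. prefix e x) \<longrightarrow> x \<notin> F \<longrightarrow> h x = h (x @ [True]) + h (x @ [False]))
    \<and> (\<forall>x. (x \<in> geod_union E F \<longrightarrow> 0 < h x) \<and> (x \<notin> geod_union E F \<longrightarrow> h x = 0))"

lemma geodesic_flowD: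
  assumes "geodesic_flow E F h"
  shows "admissible E F h"
    and "\<And>x. \<exists>e\<in>E. prefix e x \<Longrightarrow> x \<notin> F \<Longrightarrow> h x = h (x @ [True]) + h (x @ [False])"
    and "\<And>x. x \<in> geod_union E F \<Longrightarrow> 0 < h x" and "\<And>x. x \<notin> geod_union E F \<Longrightarrow> h x = 0"
  using assms unfolding geodesic_flow_def by blast+

lemma (in cap_minimizer_stopping) geodesic_flow: "geodesic_flow E F h"
  unfolding geodesic_flow_def
  using admissible conservation positive_on_geodesics zero_off_geodesics by blast

lemma harmonic_Iop_if_conservation:
  assumes adm: "admissible E F h"
    and conservation: "\<And>x. \<exists>e\<in>E. prefix e x \<Longrightarrow> x \<notin> F \<Longrightarrow> h x = h (x @ [True]) + h (x @ [False])"
  shows "harmonic_on (UNIV - (E \<union> F)) (Iop h)"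
  unfolding harmonic_on_def
proof (intro allI impI)
  fix x
  assume "interior_pt (UNIV - (E \<union> F)) x"
  then have x: "x \<noteq> []" "x \<notin> F" "x @ [True] \<notin> E" "x @ [False] \<notin> E"
    unfolding interior_pt_def by auto
  have "h x = h (x @ [True]) + h (x @ [False])"
  proof (cases "\<exists>e\<in>E. prefix e x")
    case True
    then show ?thesis using conservation x(2) by blast
  next
    case False
    have "h y = 0" if "y \<in> {x, x @ [True], x @ [False]}" for y
    proof -
      have "\<not> (\<exists>e\<in>E. prefix e y)"
        using that False x(3,4) by (auto simp: prefix_snoc)
      then show ?thesis
        using adm unfolding admissible_def by blast
    qed
    then show ?thesis
      by simp
  qed
  then show "Iop h x = (Iop h (butlast x) + Iop h (x @ [True]) + Iop h (x @ [False])) / 3"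
    using Iop_butlast[OF x(1), of h] by (simp add: Iop_snoc)
qed

lemma geod_union_below:
  assumes "stopping_time E" "e \<in> E" "prefix e x"
  shows "x \<in> geod_union E F \<longleftrightarrow> x \<in> geod_union {e} {f \<in> F. prefix e f}"
proof
  assume "x \<in> geod_union E F"
  then obtain f y where "f \<in> F" "y \<in> E" "strict_prefix y f" "prefix y x" "prefix x f"
    unfolding geod_union_def by blast
  moreover from this have "y = e"
    using stopping_time_prefix_unique[OF assms(1) _ assms(2) _ assms(3)] by blast
  ultimately show "x \<in> geod_union {e} {f \<in> F. prefix e f}"
    unfolding geod_union_def by (auto simp: strict_prefix_def)
next
  assume "x \<in> geod_union {e} {f \<in> F. prefix e f}"
  then show "x \<in> geod_union E F"
    using assms(2) unfolding geod_union_def by blast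
qed

definition glue :: "vertex set \<Rightarrow> (vertex \<Rightarrow> vertex \<Rightarrow> real) \<Rightarrow> vertex \<Rightarrow> real" where
  "glue E hs x = (\<Sum>e\<in>{e \<in> E. prefix e x}. hs e x)"

lemma glue_eq: "stopping_time E \<Longrightarrow> e \<in> E \<Longrightarrow> prefix e x \<Longrightarrow> glue E hs x = hs e x"
proof -
  assume "stopping_time E" "e \<in> E" "prefix e x"
  then have "{e' \<in> E. prefix e' x} = {e}"
    using stopping_time_prefix_unique by blast
  then show ?thesis
    by (simp add: glue_def)
qed

lemma glue_eq_0: "\<not> (\<exists>e\<in>E. prefix e x) \<Longrightarrow> glue E hs x = 0"
proof -
  assume "\<not> (\<exists>e\<in>E. prefix e x)"
  then have "{e \<in> E. prefix e x} = {}"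
    by blast
  then show ?thesis
    unfolding glue_def by (simp only: sum.empty)
qed

context
  fixes E F :: "vertex set" and hs :: "vertex \<Rightarrow> vertex \<Rightarrow> real"
  assumes stopping_E: "stopping_time E"
    and local: "\<And>e. e \<in> E \<Longrightarrow> geodesic_flow {e} {f \<in> F. prefix e f} (hs e)"
begin

lemma admissible_glue:
  assumes succ: "succ_st F E"
  shows "admissible E F (glue E hs)"
  unfolding admissible_def
proof (intro conjI ballI allI impI)
  fix f
  assume f: "f \<in> F"
  then obtain e where e: "e \<in> E" "prefix e f" "e \<noteq> f"
    using succ unfolding succ_st_def strict_prefix_def by blast
  have "glue E hs y = hs e y" if "prefix y f" for y
  proof (cases "prefix e y")
    case True
    then show ?thesis using glue_eq[OF stopping_E e(1)] by simp
  next
    case False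
    then have "\<not> (\<exists>e'\<in>E. prefix e' y)"
      using e that stopping_time_prefix_unique[OF stopping_E] prefix_order.trans by metis
    moreover have "hs e y = 0"
      using geodesic_flowD(1)[OF local[OF e(1)]] False unfolding admissible_def by blast
    ultimately show ?thesis
      using glue_eq_0 by simp
  qed
  then have "Iop (glue E hs) f = Iop (hs e) f"
    unfolding Iop_def by simp
  moreover have "f \<in> {f \<in> F. prefix e f}"
    using f e by simp
  ultimately show "1 \<le> Iop (glue E hs) f"
    using geodesic_flowD(1)[OF local[OF e(1)]] unfolding admissible_def by simp
next
  fix x
  assume "glue E hs x \<noteq> 0"
  then show "\<exists>e\<in>E. prefix e x"
    using glue_eq_0 by blast
qed

lemma geodesic_flow_glue:
  assumes "succ_st F E"
  shows "geodesic_flow E F (glue E hs)"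
proof -
  have "glue E hs x = glue E hs (x @ [True]) + glue E hs (x @ [False])"
    if below: "\<exists>e\<in>E. prefix e x" and not_F: "x \<notin> F" for x
  proof -
    obtain e where e: "e \<in> E" "prefix e x"
      using below by blast
    then have "prefix e (x @ [b])" for b
      by (auto intro: prefix_order.trans)
    then show ?thesis
      using geodesic_flowD(2)[OF local[OF e(1)], of x] e not_F glue_eq[OF stopping_E e(1)] by simp
  qed
  moreover have "(x \<in> geod_union E F \<longrightarrow> 0 < glue E hs x) \<and> (x \<notin> geod_union E F \<longrightarrow> glue E hs x = 0)"
    for x
  proof (cases "\<exists>e\<in>E. prefix e x")
    case True
    then obtain e where e: "e \<in> E" "prefix e x" ..
    show ?thesis
      unfolding glue_eq[OF stopping_E e] geod_union_below[OF stopping_E e]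
      using geodesic_flowD(3,4)[OF local[OF e(1)]] by blast
  next
    case False
    then have "x \<notin> geod_union E F"
      unfolding geod_union_def by blast
    then show ?thesis
      using glue_eq_0 False by blast
  qed
  ultimately show ?thesis
    unfolding geodesic_flow_def using admissible_glue[OF assms] by blast
qed

end

lemma Cap_finite_if_below:
  assumes "e \<notin> F" "\<forall>f\<in>F. prefix e f"
  shows "Cap {e} F < \<infinity>"
proof -
  define \<delta> where "\<delta> y = (if y = e then 1 else (0::real))" for y
  have "admissible {e} F \<delta>"
    using assms unfolding admissible_def Iop_def \<delta>_def by auto
  then have "Cap {e} F \<le> l2sq \<delta>"
    unfolding Cap_def by (intro INF_lower) simp
  also have "l2sq \<delta> = (\<Sum>\<^sub>\<infinity>x\<in>{e}. ennreal ((\<delta> x)\<^sup>2))"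
    unfolding l2sq_def by (rule infsum_cong_neutral) (auto simp: \<delta>_def)
  also have "\<dots> = 1"
    by (simp add: \<delta>_def)
  finally show ?thesis
    by (simp add: le_less_trans)
qed

lemma geodesic_flow_exists:
  assumes "stopping_time E" "stopping_time F" "E \<inter> F = {}" "succ_st F E"
  obtains h where "geodesic_flow E F h"
proof -
  have "\<exists>h. geodesic_flow {e} {f \<in> F. prefix e f} h" if e: "e \<in> E" for e
  proof -
    have "Cap {e} {f \<in> F. prefix e f} < \<infinity>"
      using assms(3) e by (intro Cap_finite_if_below) auto
    then obtain h where "cap_minimizer {e} {f \<in> F. prefix e f} h"
      by (rule minimizer_exists)
    moreover have "cap_minimizer_stopping_axioms {e} {f \<in> F. prefix e f}"
      using assms(2,3) e by unfold_locales (auto simp: stopping_time_def)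
    ultimately show ?thesis
      using cap_minimizer_stopping.geodesic_flow cap_minimizer_stopping.intro by blast
  qed
  then obtain hs where "\<And>e. e \<in> E \<Longrightarrow> geodesic_flow {e} {f \<in> F. prefix e f} (hs e)"
    by metis
  then show thesis
    using geodesic_flow_glue[OF assms(1) _ assms(4)] that by blast
qed

lemma capacity_attained_by_geodesic_flow:
  assumes "stopping_time E" "stopping_time F" "E \<inter> F = {}" "succ_st F E"
  obtains h where "geodesic_flow E F h" "Cap E F = l2sq h"
    and "\<And>S. stopping_time S \<Longrightarrow> (\<Sum>\<^sub>\<infinity>\<kappa>\<in>S. ennreal \<bar>h \<kappa>\<bar>) \<le> Cap E F"
proof (cases "Cap E F < \<infinity>")
  case True
  then obtain h where "cap_minimizer E F h"
    by (rule minimizer_exists)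
  then interpret cap_minimizer_stopping E F h
    using assms(1-3) by (intro cap_minimizer_stopping.intro cap_minimizer_stopping_axioms.intro)
  show thesis
  proof (rule that[OF geodesic_flow l2sq_eq_Cap[symmetric]])
    fix S
    assume "stopping_time S"
    then show "(\<Sum>\<^sub>\<infinity>\<kappa>\<in>S. ennreal \<bar>h \<kappa>\<bar>) \<le> Cap E F"
      using infsum_stopping_time_le_energy l2sq_eq_Cap l2sq_eq_energy[OF finite_energy] by simp
  qed
next
  case False
  then have infinite: "Cap E F = \<infinity>"
    by (metis less_top infinity_ennreal_def)
  obtain h where flow: "geodesic_flow E F h"
    using geodesic_flow_exists[OF assms] .
  have "Cap E F \<le> l2sq h"
    using geodesic_flowD(1)[OF flow] unfolding Cap_def by (intro INF_lower) simp
  with infinite have "Cap E F = l2sq h"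
    by (simp add: top_unique)
  with flow infinite show thesis
    by (intro that) auto
qed

theorem mainTheorem6:
  fixes E F :: "vertex set"
  assumes "stopping_time E" and "stopping_time F" and "E \<inter> F = {}" and "succ_st F E"
  shows "\<exists>h. admissible E F h \<and> Cap E F = l2sq h
           \<and> harmonic_on (UNIV - (E \<union> F)) (Iop h)
           \<and> (\<forall>S. stopping_time S \<longrightarrow> (\<Sum>\<^sub>\<infinity>\<kappa>\<in>S. ennreal \<bar>h \<kappa>\<bar>) \<le> 2 * Cap E F)
           \<and> (\<forall>x. (x \<in> geod_union E F \<longrightarrow> h x > 0) \<and> (x \<notin> geod_union E F \<longrightarrow> h x = 0))"
proof -
  obtain h where flow: "geodesic_flow E F h" and Cap: "Cap E F = l2sq h"
    and bound: "\<And>S. stopping_time S \<Longrightarrow> (\<Sum>\<^sub>\<infinity>\<kappa>\<in>S. ennreal \<bar>h \<kappa>\<bar>) \<le> Cap E F"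
    using capacity_attained_by_geodesic_flow[OF assms] by blast
  have "Cap E F \<le> 2 * Cap E F"
    by (metis add_increasing2 mult_2 order_refl zero_le)
  then have "\<forall>S. stopping_time S \<longrightarrow> (\<Sum>\<^sub>\<infinity>\<kappa>\<in>S. ennreal \<bar>h \<kappa>\<bar>) \<le> 2 * Cap E F"
    using bound order_trans by blast
  moreover have "harmonic_on (UNIV - (E \<union> F)) (Iop h)"
    using harmonic_Iop_if_conservation geodesic_flowD(1,2)[OF flow] by blast
  ultimately show ?thesis
    using flow Cap unfolding geodesic_flow_def by blast
qed

end
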